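(* Let $R$ be a commutative ring with identity. If $\gamma_t(\Gamma(R)) \geq 3$, then the girth of $\Gamma(R)$ is $3$.
   Context: All rings are commutative with identity. The zero-divisor graph $\Gamma(R)$ has vertex set $Z(R)^*$ (nonzero zero-divisors); distinct $r,s$ are adjacent iff $rs=0$, and $x$ is adjacent to itself iff $x^2=0$. A total dominating set is $X\subseteq Z(R)^*$ such that every vertex is adjacent to some element of $X$ (self-adjacency counts); $\gamma_t$ is its minimum cardinality. The girth is the length of a shortest cycle through distinct vertices (loops not counted), and is $\infty$ if there is no cycle. *)

theory Defs
  imports Main "HOL-Library.Extended_Nat"
begin

definition zd_vertices :: "'a::comm_ring_1 set" where
  "zd_vertices = {x. x \<noteq> 0 \<and> (\<exists>y. y \<noteq> 0 \<and> x * y = 0)}"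

text \<open>Adjacency in Gamma(R) (a vertex is adjacent to itself iff its square is zero).\<close>
definition zd_adj :: "'a::comm_ring_1 \<Rightarrow> 'a \<Rightarrow> bool" where
  "zd_adj r s \<longleftrightarrow> r \<in> zd_vertices \<and> s \<in> zd_vertices \<and> r * s = 0"

definition is_total_dominating :: "'a::comm_ring_1 set \<Rightarrow> bool" where
  "is_total_dominating X \<longleftrightarrow> X \<subseteq> zd_vertices \<and>
     (\<forall>v\<in>zd_vertices. \<exists>x\<in>X. zd_adj v x)"

definition ecard :: "'b set \<Rightarrow> enat" where
  "ecard X = (if finite X then enat (card X) else \<infinity>)"

definition total_domination_number :: "'a::comm_ring_1 itself \<Rightarrow> enat" where
  "total_domination_number _ = Inf (ecard ` {X :: 'a set. is_total_dominating X})"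

definition zd_cycle :: "nat \<Rightarrow> (nat \<Rightarrow> 'a::comm_ring_1) \<Rightarrow> bool" where
  "zd_cycle n f \<longleftrightarrow> n \<ge> 3 \<and> inj_on f {..<n} \<and>
     (\<forall>i<n. zd_adj (f i) (f ((i + 1) mod n)))"

definition zd_girth :: "'a::comm_ring_1 itself \<Rightarrow> enat" where
  "zd_girth _ = Inf {enat n | n. \<exists>f :: nat \<Rightarrow> 'a. zd_cycle n f}"

end

theory Submission
  imports Defs
begin

text \<open>If \<open>\<Gamma>(R)\<close> has no triangle, two vertices totally dominate it. When no nonzero
  element squares to zero, the ends of any edge \<open>x y\<close> do: a vertex \<open>v\<close> with
  \<open>v w = 0\<close>, \<open>w \<noteq> 0\<close>, adjacent to neither would give the triangle \<open>v x, v y, w\<close>.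
  When \<open>n \<noteq> 0\<close> and \<open>n\<^sup>2 = 0\<close>, triangle-freeness forces \<open>r n \<in> {0, n, -n}\<close> for all \<open>r\<close>
  (else \<open>n, r n, n + r n\<close> is a triangle), so every annihilator of an element not
  annihilating \<open>n\<close> annihilates \<open>n\<close>; then either \<open>n\<close> alone dominates, or \<open>n\<close> together
  with any neighbour of a vertex not adjacent to \<open>n\<close>.\<close>

definition zd_triangle :: "'a::comm_ring_1 \<Rightarrow> 'a \<Rightarrow> 'a \<Rightarrow> bool" where
  "zd_triangle a b c \<longleftrightarrow> distinct [a, b, c] \<and> a \<noteq> 0 \<and> b \<noteq> 0 \<and> c \<noteq> 0 \<and>
     a * b = 0 \<and> a * c = 0 \<and> b * c = 0"

lemma zd_adj_iff: "zd_adj r s \<longleftrightarrow> r \<noteq> 0 \<and> s \<noteq> 0 \<and> r * s = 0"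
proof
  assume "r \<noteq> 0 \<and> s \<noteq> 0 \<and> r * s = 0"
  moreover from this have "s * r = 0" by (simp add: mult.commute)
  ultimately show "zd_adj r s" unfolding zd_adj_def zd_vertices_def by blast
qed (simp add: zd_adj_def zd_vertices_def)

lemma is_total_dominating_iff:
  "is_total_dominating D \<longleftrightarrow> D \<subseteq> zd_vertices \<and> (\<forall>v\<in>zd_vertices. \<exists>x\<in>D. v * x = 0)"
  unfolding is_total_dominating_def zd_adj_def by blast

lemma total_domination_number_le_2:
  fixes D :: "'a::comm_ring_1 set"
  assumes "is_total_dominating D" and "D \<subseteq> {x, y}"
  shows "total_domination_number TYPE('a) \<le> 2"
proof -
  have "finite D" using assms(2) finite_subset by blast
  have "card D \<le> card {x, y}" using assms(2) by (simp add: card_mono)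
  also have "\<dots> \<le> 2" by (simp add: card_insert_le_m1)
  finally have "ecard D \<le> 2" using \<open>finite D\<close> by (simp add: ecard_def numeral_eq_enat)
  moreover have "total_domination_number TYPE('a) \<le> ecard D"
    unfolding total_domination_number_def using assms(1) by (intro Inf_lower) auto
  ultimately show ?thesis by simp
qed

lemma zd_girth_ge_3: "zd_girth TYPE('a::comm_ring_1) \<ge> 3"
  unfolding zd_girth_def zd_cycle_def by (rule Inf_greatest) (auto simp: numeral_eq_enat)

lemma zd_triangle_imp_zd_girth_3:
  fixes a b c :: "'a::comm_ring_1"
  assumes "zd_triangle a b c"
  shows "zd_girth TYPE('a) = 3"
proof (rule antisym)
  have "zd_cycle 3 (nth [a, b, c])"
    unfolding zd_cycle_def
  proof (intro conjI allI impI)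
    show "inj_on (nth [a, b, c]) {..<3}"
      using assms by (intro inj_on_nth) (auto simp: zd_triangle_def)
    fix i :: nat assume "i < 3"
    then consider "i = 0" | "i = 1" | "i = 2" by linarith
    then show "zd_adj ([a, b, c] ! i) ([a, b, c] ! ((i + 1) mod 3))"
      using assms by cases (auto simp: zd_triangle_def zd_adj_iff mult.commute)
  qed simp
  then show "zd_girth TYPE('a) \<le> 3"
    unfolding zd_girth_def by (intro Inf_lower) (auto simp: numeral_eq_enat)
next
  show "zd_girth TYPE('a) \<ge> 3" by (rule zd_girth_ge_3)
qed

lemma zd_triangle_if_no_square_zero:
  fixes a b c :: "'a::comm_ring_1"
  assumes "\<And>x::'a. x * x = 0 \<Longrightarrow> x = 0"
    and "a \<noteq> 0" "b \<noteq> 0" "c \<noteq> 0" "a * b = 0" "a * c = 0" "b * c = 0"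
  shows "zd_triangle a b c"
  using assms unfolding zd_triangle_def by (metis distinct_length_2_or_more distinct_singleton)

lemma triangle_free_total_domination_number_le_2_no_square_zero:
  assumes no_triangle: "\<And>a b c :: 'a::comm_ring_1. \<not> zd_triangle a b c"
    and no_square_zero: "\<And>x :: 'a. x * x = 0 \<Longrightarrow> x = 0"
  shows "total_domination_number TYPE('a) \<le> 2"
proof (cases "zd_vertices = ({} :: 'a set)")
  case True
  then have "is_total_dominating ({} :: 'a set)" by (simp add: is_total_dominating_iff)
  then show ?thesis by (rule total_domination_number_le_2) simp
next
  case False
  then obtain x y :: 'a where "zd_adj x y"
    unfolding zd_vertices_def zd_adj_iff by blast
  then have xy: "x * y = 0" and "{x, y} \<subseteq> zd_vertices"
    by (auto simp: zd_adj_def)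
  moreover have "\<exists>z\<in>{x, y}. v * z = 0" if "v \<in> zd_vertices" for v
  proof (rule ccontr)
    assume "\<not> (\<exists>z\<in>{x, y}. v * z = 0)"
    then have "v * x \<noteq> 0" "v * y \<noteq> 0" by auto
    obtain w where "w \<noteq> 0" "v * w = 0"
      using \<open>v \<in> zd_vertices\<close> unfolding zd_vertices_def by blast
    have "(v * x) * (v * y) = (v * v) * (x * y)" "(v * x) * w = x * (v * w)"
      "(v * y) * w = y * (v * w)" by (simp_all add: ac_simps)
    then have "zd_triangle (v * x) (v * y) w"
      using \<open>v * x \<noteq> 0\<close> \<open>v * y \<noteq> 0\<close> \<open>w \<noteq> 0\<close> \<open>v * w = 0\<close> xy
      by (intro zd_triangle_if_no_square_zero[OF no_square_zero]) simp_all
    with no_triangle show False by blast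
  qed
  ultimately have "is_total_dominating {x, y}" by (simp add: is_total_dominating_iff)
  then show ?thesis by (rule total_domination_number_le_2[OF _ subset_refl])
qed

lemma triangle_free_mult_square_zero_cases:
  fixes n r :: "'a::comm_ring_1"
  assumes no_triangle: "\<And>a b c :: 'a. \<not> zd_triangle a b c"
    and "n \<noteq> 0" "n * n = 0"
  shows "r * n = 0 \<or> r * n = n \<or> r * n = - n"
proof (rule ccontr)
  assume "\<not> ?thesis"
  moreover have "n * (r * n) = r * (n * n)" "n * (n + r * n) = n * n + r * (n * n)"
    "(r * n) * (n + r * n) = r * (n * n) + (r * r) * (n * n)"
    by (simp_all add: algebra_simps)
  ultimately have "zd_triangle n (r * n) (n + r * n)"
    using \<open>n \<noteq> 0\<close> \<open>n * n = 0\<close> by (auto simp: zd_triangle_def add_eq_0_iff)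
  with no_triangle show False by blast
qed

lemma triangle_free_annihilates_square_zero:
  fixes n r w :: "'a::comm_ring_1"
  assumes no_triangle: "\<And>a b c :: 'a. \<not> zd_triangle a b c"
    and "n \<noteq> 0" "n * n = 0" "r * n \<noteq> 0" "r * w = 0"
  shows "w * n = 0"
proof -
  have "w * (r * n) = (r * w) * n" by (simp add: ac_simps)
  with \<open>r * w = 0\<close> have "w * (r * n) = 0" by simp
  then show ?thesis
    using triangle_free_mult_square_zero_cases[OF no_triangle \<open>n \<noteq> 0\<close> \<open>n * n = 0\<close>, of r]
      \<open>r * n \<noteq> 0\<close> by auto
qed

lemma triangle_free_square_nonzero:
  fixes n c :: "'a::comm_ring_1"
  assumes no_triangle: "\<And>a b c :: 'a. \<not> zd_triangle a b c"
    and "n \<noteq> 0" "n * n = 0" "c \<noteq> 0" "c * n = 0" "c \<noteq> n" "c \<noteq> - n"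
  shows "c * c \<noteq> 0"
proof
  assume "c * c = 0"
  moreover have "n * c = c * n" "n * (c + n) = c * n + n * n" "c * (c + n) = c * c + c * n"
    by (simp_all add: algebra_simps)
  ultimately have "zd_triangle n c (c + n)"
    using assms(2-) by (auto simp: zd_triangle_def add_eq_0_iff2)
  with no_triangle show False by blast
qed

lemma triangle_free_square_zero_partner:
  fixes n v0 y v :: "'a::comm_ring_1"
  assumes no_triangle: "\<And>a b c :: 'a. \<not> zd_triangle a b c"
    and "n \<noteq> 0" "n * n = 0" "v0 * n \<noteq> 0" "v0 * y = 0"
    and "v \<in> zd_vertices" "v * n \<noteq> 0"
  shows "v * y = 0"
proof (rule ccontr)
  assume "v * y \<noteq> 0"
  obtain w where "w \<noteq> 0" "v * w = 0"
    using \<open>v \<in> zd_vertices\<close> unfolding zd_vertices_def by blast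
  note annihilates = triangle_free_annihilates_square_zero[OF no_triangle \<open>n \<noteq> 0\<close> \<open>n * n = 0\<close>]
  have "w * n = 0" by (rule annihilates[OF \<open>v * n \<noteq> 0\<close> \<open>v * w = 0\<close>])
  have "y * n = 0" by (rule annihilates[OF \<open>v0 * n \<noteq> 0\<close> \<open>v0 * y = 0\<close>])
  have "w \<noteq> n" "w \<noteq> - n" using \<open>v * w = 0\<close> \<open>v * n \<noteq> 0\<close> by auto
  then have "w * w \<noteq> 0"
    using triangle_free_square_nonzero[OF no_triangle \<open>n \<noteq> 0\<close> \<open>n * n = 0\<close> \<open>w \<noteq> 0\<close> \<open>w * n = 0\<close>]
    by blast
  define z where "z = v * y"
  have "n * z = v * (y * n)" "w * z = y * (v * w)" "z * v0 = v * (v0 * y)"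
    by (simp_all add: z_def ac_simps)
  then have "n * z = 0" "w * z = 0" "z * v0 = 0"
    using \<open>y * n = 0\<close> \<open>v * w = 0\<close> \<open>v0 * y = 0\<close> by simp_all
  have "z \<noteq> n" using \<open>z * v0 = 0\<close> \<open>v0 * n \<noteq> 0\<close> by (auto simp: mult.commute)
  have "w \<noteq> z" using \<open>w * z = 0\<close> \<open>w * w \<noteq> 0\<close> by auto
  have "n * w = 0" using \<open>w * n = 0\<close> by (simp add: mult.commute)
  then have "zd_triangle n w z"
    using \<open>n * z = 0\<close> \<open>w * z = 0\<close> \<open>z \<noteq> n\<close> \<open>w \<noteq> z\<close> \<open>w \<noteq> n\<close> \<open>n \<noteq> 0\<close> \<open>w \<noteq> 0\<close>
      \<open>v * y \<noteq> 0\<close> by (auto simp: zd_triangle_def z_def)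
  with no_triangle show False by blast
qed

lemma triangle_free_total_domination_number_le_2_square_zero:
  fixes n :: "'a::comm_ring_1"
  assumes no_triangle: "\<And>a b c :: 'a. \<not> zd_triangle a b c"
    and "n \<noteq> 0" "n * n = 0"
  shows "total_domination_number TYPE('a) \<le> 2"
proof -
  have "n \<in> zd_vertices" using assms(2,3) unfolding zd_vertices_def by blast
  consider "\<forall>v\<in>zd_vertices. v * n = 0" | v0 where "v0 \<in> zd_vertices" "v0 * n \<noteq> 0"
    by blast
  then show ?thesis
  proof cases
    case 1
    then have "is_total_dominating {n}"
      using \<open>n \<in> zd_vertices\<close> by (simp add: is_total_dominating_iff)
    then show ?thesis by (rule total_domination_number_le_2[of _ n n]) simp
  next
    case 2
    then obtain y where "y \<noteq> 0" "v0 * y = 0" unfolding zd_vertices_def by blast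
    then have "zd_adj v0 y" using \<open>v0 * n \<noteq> 0\<close> by (auto simp: zd_adj_iff)
    then have "y \<in> zd_vertices" by (simp add: zd_adj_def)
    then have "is_total_dominating {n, y}"
      using \<open>n \<in> zd_vertices\<close> triangle_free_square_zero_partner[OF assms 2(2) \<open>v0 * y = 0\<close>]
      by (auto simp: is_total_dominating_iff)
    then show ?thesis by (rule total_domination_number_le_2[OF _ subset_refl])
  qed
qed

lemma triangle_free_total_domination_number_le_2:
  assumes "\<And>a b c :: 'a::comm_ring_1. \<not> zd_triangle a b c"
  shows "total_domination_number TYPE('a) \<le> 2"
proof (cases "\<exists>n :: 'a. n \<noteq> 0 \<and> n * n = 0")
  case True
  then show ?thesis using triangle_free_total_domination_number_le_2_square_zero[OF assms] by blast
next
  case False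
  then show ?thesis using triangle_free_total_domination_number_le_2_no_square_zero[OF assms] by blast
qed

theorem proposition3p5:
  assumes "total_domination_number TYPE('a::comm_ring_1) \<ge> 3"
  shows "zd_girth TYPE('a) = 3"
proof (rule ccontr)
  assume "zd_girth TYPE('a) \<noteq> 3"
  then have "\<not> zd_triangle a b c" for a b c :: 'a
    using zd_triangle_imp_zd_girth_3 by blast
  then have "total_domination_number TYPE('a) \<le> 2"
    by (rule triangle_free_total_domination_number_le_2)
  with assms have "(3 :: enat) \<le> 2" by (rule order_trans)
  then show False by (simp add: numeral_eq_enat)
qed

end
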